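(* For every integer $n\ge 1$, the combinatorial neural codes $S_n$ and $P(2_n)$ are $1$-inductively pierced.
   Context: A combinatorial neural code on $m$ neurons is a set $\mathcal{C}\subseteq\{0,1\}^m$ containing the all-zeros word. Its abstract description is $\mathcal{D}=(\mathcal{L},\mathcal{Z})$ with curve labels $\mathcal{L}=\{\lambda_1,\dots,\lambda_m\}$ and zones $\mathcal{Z}=\{\{\lambda_i : c_i=1\} : c\in\mathcal{C}\}\subseteq 2^{\mathcal{L}}$ (so $\emptyset\in\mathcal{Z}$). An Euler diagram (a collection of labelled simple closed curves in the plane, zones being the nonempty regions $\bigcap_{\lambda_i\in Z}U_i\cap\bigcap_{\lambda_j\notin Z}U_j^c$ with $U_i$ the interior of $\lambda_i$) realizes $\mathcal{D}$ if its labels and zones are those of $\mathcal{D}$; it is well-formed if each label is used exactly once, curves meet in finitely many points, each point of the plane is passed through at most twice by the curves, and each zone is connected. $\mathcal{D}$ is well-formed if it has a well-formed realization. For $\lambda\in\mathcal{L}$ let $\mathcal{X}_\lambda=\{Z\in\mathcal{Z}:\lambda\in Z\}$. For $Z\in\mathcal{Z}$ and $\Lambda\subseteq\mathcal{L}$ with $Z\cap\Lambda=\emptyset$ let $\mathcal{Y}_{Z,\Lambda}=\{Z\cup\Lambda' : \Lambda'\subseteq\Lambda\}$. Given distinct labels $\Lambda=\{\lambda_1,\dots,\lambda_k\}\subseteq\mathcal{L}$, a label $\lambda_{k+1}\in\mathcal{L}$ is a $k$-piercing of $\Lambda$ in $\mathcal{D}$ if there is a zone $Z\in\mathcal{Z}$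 with (1) $\lambda_i\notin Z$ for all $i\le k+1$, (2) $\mathcal{X}_{\lambda_{k+1}}=\mathcal{Y}_{Z\cup\{\lambda_{k+1}\},\Lambda}$, and (3) $\mathcal{Y}_{Z,\Lambda}\subseteq\mathcal{Z}$. The removal of $\lambda$ is $\mathcal{D}\setminus\lambda=(\mathcal{L}\setminus\{\lambda\},\{Z\setminus\{\lambda\}:Z\in\mathcal{Z}\})$. Recursively, $(\emptyset,\{\emptyset\})$ is $k$-inductively pierced for all $k$, and $\mathcal{D}$ is $k$-inductively pierced if it has a $j$-piercing $\lambda$ (of some set of $j$ labels) for some $j\in\{0,\dots,k\}$ such that $\mathcal{D}\setminus\lambda$ is $k$-inductively pierced. A code is $k$-inductively pierced if it has a well-formed abstract description that is $k$-inductively pierced. Codes: with $e_i\in\mathbb{R}^{n+1}$ the standard basis vectors, $S_n=\{0,s_1,\dots,s_{2n}\}$ where $s_i=e_1+e_{i+1}+e_{n+1}$ for $1\le i<n$, $s_n=e_1+e_{n+1}$, $s_i=e_{i+1-n}+e_{n+1}$ for $n<i<2n$, $s_{2n}=e_{n+1}$. The code $P(2_n)\subseteq\{0,1\}^{2n+1}$ consists of the zero word together with the columns of the $(2n+1)\times(3n+1)$ matrix $M_n$ whose columns, for $i=0,\dots,n-1$, are: column $3i+1$ equal to $e_{2i+1}+e_{2n+1}$, column $3i+2$ equal to $e_{2i+1}+e_{2i+2}+e_{2n+1}$, column $3i+3$ equal to $e_{2i+2}+e_{2n+1}$, and column $3n+1$ equal to $e_{2n+1}$ (here $e_i\in\mathbb{R}^{2n+1}$).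 (Equivalently, the first $3n$ columns are $A\oplus\cdots\oplus A$ with $A=\begin{bmatrix}1&1&0\\0&1&1\end{bmatrix}$, with a row of ones appended.) *)

theory Defs
  imports "HOL-Analysis.Analysis"
begin

text \<open>A word of {0,1}^m is a list of naturals of length m with entries in {0,1}.
  Coordinates are 1-indexed as in the paper: coordinate i is the list entry at position i-1.\<close>

definition unit_vec :: "nat \<Rightarrow> nat \<Rightarrow> nat list" where
  "unit_vec m i = map (\<lambda>j. if j = i then 1 else 0) [1..<m+1]"

definition vadd :: "nat list \<Rightarrow> nat list \<Rightarrow> nat list" where
  "vadd u v = map2 (+) u v"

definition zero_word :: "nat \<Rightarrow> nat list" where
  "zero_word m = replicate m 0"

definition is_code :: "nat \<Rightarrow> nat list set \<Rightarrow> bool" where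
  "is_code m C \<longleftrightarrow> zero_word m \<in> C \<and> (\<forall>c\<in>C. length c = m \<and> set c \<subseteq> {0,1})"

text \<open>An abstract description is a pair (L, Zs) of a label set and a set of zones.
  For a code on m neurons the labels are 1..m (label i stands for lambda_i).\<close>

definition desc :: "nat \<Rightarrow> nat list set \<Rightarrow> nat set \<times> nat set set" where
  "desc m C = ({1..m}, (\<lambda>c. {i\<in>{1..m}. c ! (i - 1) = 1}) ` C)"

definition zone_region :: "(nat \<Rightarrow> real \<Rightarrow> complex) \<Rightarrow> nat set \<Rightarrow> nat set \<Rightarrow> complex set" where
  "zone_region \<gamma> L Z =
     (\<Inter>l\<in>Z. inside (path_image (\<gamma> l))) \<inter> (\<Inter>l\<in>L - Z. - inside (path_image (\<gamma> l)))"

definition realizes :: "(nat \<Rightarrow> real \<Rightarrow> complex) \<Rightarrow> nat set \<times> nat set set \<Rightarrow> bool" where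
  "realizes \<gamma> D \<longleftrightarrow>
     (\<forall>l\<in>fst D. simple_path (\<gamma> l) \<and> pathfinish (\<gamma> l) = pathstart (\<gamma> l)) \<and>
     {Z. Z \<subseteq> fst D \<and> zone_region \<gamma> (fst D) Z \<noteq> {}} = snd D"

definition well_formed_realization :: "(nat \<Rightarrow> real \<Rightarrow> complex) \<Rightarrow> nat set \<times> nat set set \<Rightarrow> bool" where
  "well_formed_realization \<gamma> D \<longleftrightarrow>
     realizes \<gamma> D \<and>
     (\<forall>l\<in>fst D. \<forall>l'\<in>fst D. l \<noteq> l' \<longrightarrow> finite (path_image (\<gamma> l) \<inter> path_image (\<gamma> l'))) \<and>
     (\<forall>p. card {l\<in>fst D. p \<in> path_image (\<gamma> l)} \<le> 2) \<and>
     (\<forall>Z\<in>snd D. connected (zone_region \<gamma> (fst D) Z))"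

definition well_formed :: "nat set \<times> nat set set \<Rightarrow> bool" where
  "well_formed D \<longleftrightarrow> finite (fst D) \<and> (\<exists>\<gamma>. well_formed_realization \<gamma> D)"

definition Xset :: "nat set set \<Rightarrow> nat \<Rightarrow> nat set set" where
  "Xset Zs l = {Z\<in>Zs. l \<in> Z}"

definition Yset :: "nat set \<Rightarrow> nat set \<Rightarrow> nat set set" where
  "Yset Z \<Lambda> = {Z \<union> \<Lambda>' | \<Lambda>'. \<Lambda>' \<subseteq> \<Lambda>}"

definition is_piercing :: "nat \<Rightarrow> nat set \<Rightarrow> nat set set \<Rightarrow> nat set \<Rightarrow> nat \<Rightarrow> bool" where
  "is_piercing k L Zs \<Lambda> l \<longleftrightarrow>
     finite \<Lambda> \<and> card \<Lambda> = k \<and> \<Lambda> \<subseteq> L \<and> l \<in> L \<and> l \<notin> \<Lambda> \<and>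
     (\<exists>Z\<in>Zs. l \<notin> Z \<and> Z \<inter> \<Lambda> = {} \<and>
        Xset Zs l = Yset (insert l Z) \<Lambda> \<and> Yset Z \<Lambda> \<subseteq> Zs)"

definition remove_label :: "nat \<Rightarrow> nat set \<times> nat set set \<Rightarrow> nat set \<times> nat set set" where
  "remove_label l D = (fst D - {l}, (\<lambda>Z. Z - {l}) ` snd D)"

inductive k_ind_pierced :: "nat \<Rightarrow> nat set \<times> nat set set \<Rightarrow> bool" for k where
  empty: "k_ind_pierced k ({}, {{}})"
| step: "\<lbrakk> j \<le> k; is_piercing j (fst D) (snd D) \<Lambda> l; k_ind_pierced k (remove_label l D) \<rbrakk>
         \<Longrightarrow> k_ind_pierced k D"

definition code_k_ind_pierced :: "nat \<Rightarrow> nat \<Rightarrow> nat list set \<Rightarrow> bool" where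
  "code_k_ind_pierced k m C \<longleftrightarrow>
     is_code m C \<and> well_formed (desc m C) \<and> k_ind_pierced k (desc m C)"

definition s_word :: "nat \<Rightarrow> nat \<Rightarrow> nat list" where
  "s_word n i =
    (if i < n then vadd (vadd (unit_vec (n+1) 1) (unit_vec (n+1) (i+1))) (unit_vec (n+1) (n+1))
     else if i = n then vadd (unit_vec (n+1) 1) (unit_vec (n+1) (n+1))
     else if i < 2*n then vadd (unit_vec (n+1) (i+1-n)) (unit_vec (n+1) (n+1))
     else unit_vec (n+1) (n+1))"

definition S_code :: "nat \<Rightarrow> nat list set" where
  "S_code n = insert (zero_word (n+1)) (s_word n ` {1..2*n})"

definition P2_code :: "nat \<Rightarrow> nat list set" where
  "P2_code n = insert (zero_word (2*n+1))
     (insert (unit_vec (2*n+1) (2*n+1))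
       (\<Union>i\<in>{0..<n}.
          { vadd (unit_vec (2*n+1) (2*i+1)) (unit_vec (2*n+1) (2*n+1)),
            vadd (vadd (unit_vec (2*n+1) (2*i+1)) (unit_vec (2*n+1) (2*i+2))) (unit_vec (2*n+1) (2*n+1)),
            vadd (unit_vec (2*n+1) (2*i+2)) (unit_vec (2*n+1) (2*n+1)) }))"

end

theory Submission
  imports Defs "HOL-Complex_Analysis.Contour_Integration"
begin

(*
  Both codes are combs: an outer curve enclosing disjoint bars, each bar crossed through its
  upper edge by a row of disjoint teeth.  S_n is the single bar 1 with the teeth 2, ..., n inside
  the outer curve n + 1; P(2_n) consists of the bars 2i + 1, each with the single tooth 2i + 2,
  inside the outer curve 2n + 1.

  Drawing every curve as the boundary of an axis-parallel rectangle gives a well-formed diagram: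
  two boundaries meet only where a tooth crosses its bar, and every zone is connected because
  each of its points is joined by a vertical segment to a connected part of the zone.  For the
  piercing order, a tooth b of the bar a is a 1-piercing of {a} with base zone {outer}; once the
  teeth are removed, the bars and finally the outer curve are 0-piercings.
*)

definition indicator_word :: "nat \<Rightarrow> nat set \<Rightarrow> nat list" where
  "indicator_word m A = map (\<lambda>j. if j \<in> A then 1 else 0) [1..<m+1]"

lemma unit_vec_eq_indicator_word: "unit_vec m i = indicator_word m {i}"
  unfolding unit_vec_def indicator_word_def by simp

lemma zero_word_eq_indicator_word: "zero_word m = indicator_word m {}"
  unfolding zero_word_def indicator_word_def by (simp add: map_replicate_const)

lemma vadd_indicator_word:
  "A \<inter> B = {} \<Longrightarrow> vadd (indicator_word m A) (indicator_word m B) = indicator_word m (A \<union> B)"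
  unfolding vadd_def indicator_word_def by (auto simp: map2_map_map)

lemma indicator_word_nth:
  assumes "i \<in> {1..m}"
  shows "indicator_word m A ! (i - 1) = (if i \<in> A then 1 else 0)"
proof -
  have "i - 1 < m + 1 - 1"
    using assms by auto
  then show ?thesis
    using assms unfolding indicator_word_def by (subst nth_map_upt) auto
qed

lemma desc_indicator_words:
  assumes "\<forall>A\<in>F. A \<subseteq> {1..m}"
  shows "desc m (indicator_word m ` F) = ({1..m}, F)"
proof -
  have support: "{i\<in>{1..m}. indicator_word m A ! (i - 1) = 1} = A" if "A \<subseteq> {1..m}" for A
  proof (rule set_eqI)
    fix i
    show "i \<in> {i\<in>{1..m}. indicator_word m A ! (i - 1) = 1} \<longleftrightarrow> i \<in> A"
    proof (cases "i \<in> {1..m}")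
      case True
      then show ?thesis
        using indicator_word_nth[OF True, of A] by simp
    qed (use that in auto)
  qed
  have "(\<lambda>c. {i\<in>{1..m}. c ! (i - 1) = 1}) ` indicator_word m ` F = (\<lambda>A. A) ` F"
    unfolding image_image using assms support by (intro image_cong) auto
  then show ?thesis
    unfolding desc_def by simp
qed

lemma is_code_indicator_words:
  assumes "{} \<in> F"
  shows "is_code m (indicator_word m ` F)"
proof -
  have "zero_word m \<in> indicator_word m ` F"
    unfolding zero_word_eq_indicator_word using assms by (rule imageI)
  moreover have "length c = m \<and> set c \<subseteq> {0, 1}" if "c \<in> indicator_word m ` F" for c
    using that unfolding indicator_word_def by auto
  ultimately show ?thesis
    unfolding is_code_def by blast
qed

lemma code_k_ind_pierced_indicator_words:
  assumes "{} \<in> F" "\<forall>A\<in>F. A \<subseteq> {1..m}"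
    and "well_formed ({1..m}, F)" "k_ind_pierced k ({1..m}, F)"
  shows "code_k_ind_pierced k m (indicator_word m ` F)"
  unfolding code_k_ind_pierced_def desc_indicator_words[OF assms(2)]
  using is_code_indicator_words[OF assms(1)] assms(3,4) by simp

section \<open>Inductive piercing of combs\<close>

lemma k_ind_pierced_remove_0_piercing:
  assumes "l \<in> L" "Z \<in> Zs" "l \<notin> Z" "Xset Zs l = {insert l Z}"
    and "k_ind_pierced k (L - {l}, (\<lambda>Z. Z - {l}) ` Zs)"
  shows "k_ind_pierced k (L, Zs)"
proof (rule k_ind_pierced.step)
  show "is_piercing 0 (fst (L, Zs)) (snd (L, Zs)) {} l"
    unfolding is_piercing_def Yset_def using assms(1-4) by auto
qed (use assms(5) in \<open>auto simp: remove_label_def\<close>)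

lemma k_ind_pierced_remove_1_piercing:
  assumes "1 \<le> k" "l \<in> L" "a \<in> L" "a \<noteq> l" "Z \<in> Zs" "l \<notin> Z" "a \<notin> Z" "insert a Z \<in> Zs"
    and "Xset Zs l = {insert l Z, insert a (insert l Z)}"
    and "k_ind_pierced k (L - {l}, (\<lambda>Z. Z - {l}) ` Zs)"
  shows "k_ind_pierced k (L, Zs)"
proof (rule k_ind_pierced.step)
  have "Yset Y {a} = {Y, insert a Y}" for Y
    unfolding Yset_def by (auto simp: subset_singleton_iff)
  then show "is_piercing 1 (fst (L, Zs)) (snd (L, Zs)) {a} l"
    unfolding is_piercing_def using assms(2-9) by (auto simp: insert_commute)
qed (use assms(1,10) in \<open>auto simp: remove_label_def\<close>)

(* The zones of a comb with outer curve c and bars A, where (b, a) \<in> T means that the tooth b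
   crosses the bar a. *)
definition comb_zones :: "nat \<Rightarrow> nat set \<Rightarrow> (nat \<times> nat) set \<Rightarrow> nat set set" where
  "comb_zones c A T =
     {{}, {c}} \<union> (\<lambda>a. {c, a}) ` A \<union> (\<lambda>(b, a). {c, a, b}) ` T \<union> (\<lambda>(b, a). {c, b}) ` T"

lemma comb_zones_subset:
  assumes "Z \<in> comb_zones c A T" "snd ` T \<subseteq> A"
  shows "Z \<subseteq> insert c (A \<union> fst ` T)"
  using assms unfolding comb_zones_def by force

lemma comb_zones_insert_tooth:
  "comb_zones c A (insert (b, a) T) = insert {c, a, b} (insert {c, b} (comb_zones c A T))"
  unfolding comb_zones_def by blast

lemma Xset_insert: "Xset (insert Z Zs) l = (if l \<in> Z then insert Z (Xset Zs l) else Xset Zs l)"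
  unfolding Xset_def by auto

lemma k_ind_pierced_comb_without_teeth:
  assumes "finite A" "c \<notin> A"
  shows "k_ind_pierced k (insert c A, comb_zones c A {})"
  using assms
proof (induction A rule: finite_induct)
  case empty
  show ?case
  proof (rule k_ind_pierced_remove_0_piercing)
    show "Xset (comb_zones c {} {}) c = {insert c {}}"
      unfolding Xset_def comb_zones_def by auto
    have "(insert c {} - {c}, (\<lambda>Z. Z - {c}) ` comb_zones c {} {}) = ({}, {{}})"
      unfolding comb_zones_def by auto
    then show "k_ind_pierced k (insert c {} - {c}, (\<lambda>Z. Z - {c}) ` comb_zones c {} {})"
      using k_ind_pierced.empty by simp
  qed (auto simp: comb_zones_def)
next
  case (insert a A)
  show ?case
  proof (rule k_ind_pierced_remove_0_piercing)
    show "Xset (comb_zones c (insert a A) {}) a = {insert a {c}}"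
      using insert.hyps(2) insert.prems unfolding Xset_def comb_zones_def by auto
    have "insert c (insert a A) - {a} = insert c A"
      "(\<lambda>Z. Z - {a}) ` comb_zones c (insert a A) {} = comb_zones c A {}"
      using insert.hyps(2) insert.prems unfolding comb_zones_def by auto
    then show "k_ind_pierced k
        (insert c (insert a A) - {a}, (\<lambda>Z. Z - {a}) ` comb_zones c (insert a A) {})"
      using insert.IH insert.prems by simp
  qed (use insert.prems in \<open>auto simp: comb_zones_def\<close>)
qed

lemma Xset_comb_zones_insert_tooth:
  assumes "b \<notin> insert c (A \<union> fst ` T)" "snd ` T \<subseteq> A"
  shows "Xset (comb_zones c A (insert (b, a) T)) b = {insert b {c}, insert a (insert b {c})}"
proof -
  have "Xset (comb_zones c A T) b = {}"
    using comb_zones_subset[OF _ assms(2)] assms(1) unfolding Xset_def by blast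
  then show ?thesis
    unfolding comb_zones_insert_tooth Xset_insert by (simp add: insert_commute)
qed

lemma remove_tooth_comb_zones:
  assumes "b \<notin> insert c (A \<union> fst ` T)" "snd ` T \<subseteq> A" "a \<in> A"
  shows "(\<lambda>Z. Z - {b}) ` comb_zones c A (insert (b, a) T) = comb_zones c A T"
proof -
  have "b \<notin> Z" if "Z \<in> comb_zones c A T" for Z
    using comb_zones_subset[OF that assms(2)] assms(1) by blast
  then have "(\<lambda>Z. Z - {b}) ` comb_zones c A T = comb_zones c A T"
    by (simp add: image_cong)
  moreover have "{c, a, b} - {b} = {c, a}" "{c, b} - {b} = {c}"
    using assms by auto
  moreover have "{c, a} \<in> comb_zones c A T" "{c} \<in> comb_zones c A T"
    using assms(3) unfolding comb_zones_def by auto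
  ultimately show ?thesis
    unfolding comb_zones_insert_tooth by (simp add: insert_absorb)
qed

lemma k_ind_pierced_comb:
  assumes "1 \<le> k" "finite A" "finite T" "c \<notin> A" "c \<notin> fst ` T" "A \<inter> fst ` T = {}"
    and "snd ` T \<subseteq> A" "inj_on fst T"
  shows "k_ind_pierced k (insert c (A \<union> fst ` T), comb_zones c A T)"
  using assms(3-8)
proof (induction T rule: finite_induct)
  case empty
  then show ?case
    using k_ind_pierced_comb_without_teeth[OF assms(2)] by simp
next
  case (insert x T)
  obtain b a where x: "x = (b, a)"
    by fastforce
  have b: "b \<notin> insert c (A \<union> fst ` T)"
    using insert.hyps(2) insert.prems unfolding x by (force simp: inj_on_def)
  have a: "a \<in> A"
    using insert.prems unfolding x by auto
  have "k_ind_pierced k (insert c (A \<union> fst ` insert (b, a) T), comb_zones c A (insert (b, a) T))"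
  proof (rule k_ind_pierced_remove_1_piercing[OF assms(1), where a = a and Z = "{c}"])
    show "Xset (comb_zones c A (insert (b, a) T)) b = {insert b {c}, insert a (insert b {c})}"
      using b insert.prems(4) by (intro Xset_comb_zones_insert_tooth) auto
    have "insert c (A \<union> fst ` insert (b, a) T) - {b} = insert c (A \<union> fst ` T)"
      using b by auto
    then show "k_ind_pierced k (insert c (A \<union> fst ` insert (b, a) T) - {b},
        (\<lambda>Z. Z - {b}) ` comb_zones c A (insert (b, a) T))"
      using insert.IH insert.prems remove_tooth_comb_zones[OF b _ a] unfolding x by simp
  qed (use a b insert.prems in \<open>auto simp: comb_zones_def\<close>)
  then show ?case
    unfolding x .
qed

section \<open>Euler diagrams of convex regions\<close>

lemma simple_closed_path_around_convex:
  fixes S :: "complex set"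
  assumes "open S" "bounded S" "convex S" "S \<noteq> {}"
  obtains g :: "real \<Rightarrow> complex"
  where "simple_path g" "pathfinish g = pathstart g" "path_image g = frontier S"
    "inside (path_image g) = S"
proof -
  have "aff_dim S = aff_dim (cball (0::complex) 1)"
    using aff_dim_open[OF assms(1,4)] aff_dim_open[of "ball (0::complex) 1"]
    by (simp add: aff_dim_cball)
  then have "rel_frontier S homeomorphic rel_frontier (cball (0::complex) 1)"
    using assms(2,3) by (intro homeomorphic_rel_frontiers_convex_bounded_sets) simp_all
  moreover have "rel_frontier S = frontier S"
    using assms(1,4) by (simp add: rel_frontier_nonempty_interior interior_open)
  moreover have "rel_frontier (cball (0::complex) 1) = sphere 0 1"
    by simp
  ultimately have "sphere (0::complex) 1 homeomorphic frontier S"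
    by (metis homeomorphic_sym)
  then obtain f h where f: "homeomorphism (sphere (0::complex) 1) (frontier S) f h"
    by (auto simp: homeomorphic_def)
  define loop where "loop = f \<circ> circlepath 0 1"
  have "simple_path loop"
    unfolding loop_def
  proof (rule simple_path_continuous_image)
    show "continuous_on (path_image (circlepath 0 1)) f"
      using f by (simp add: homeomorphism_def)
    show "inj_on f (path_image (circlepath 0 1))"
      using f unfolding homeomorphism_def
      by (metis (no_types, lifting) inj_on_inverseI path_image_circlepath abs_one)
  qed (simp add: simple_path_circlepath)
  moreover have "pathfinish loop = pathstart loop"
    by (simp add: loop_def pathfinish_compose pathstart_compose)
  moreover have "path_image loop = frontier S"
    using f by (simp add: loop_def path_image_compose homeomorphism_def)
  moreover have "inside (frontier S) = S"
    using assms by (simp add: inside_frontier_eq_interior interior_open)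
  ultimately show ?thesis
    using that by simp
qed

lemma zone_region_of_regions:
  assumes "inj_on lab K" "Z \<subseteq> K"
    and inside: "\<And>k. k \<in> K \<Longrightarrow> inside (path_image (\<gamma> (lab k))) = R k"
  shows "zone_region \<gamma> (lab ` K) (lab ` Z) = {p. {k\<in>K. p \<in> R k} = Z}"
proof -
  have "lab ` K - lab ` Z = lab ` (K - Z)"
    using assms(1,2) by (simp add: inj_on_image_set_diff)
  moreover have "(\<Inter>k\<in>Z. inside (path_image (\<gamma> (lab k)))) = (\<Inter>k\<in>Z. R k)"
    using inside assms(2) by (intro INF_cong) auto
  moreover have "(\<Inter>k\<in>K - Z. - inside (path_image (\<gamma> (lab k)))) = (\<Inter>k\<in>K - Z. - R k)"
    using inside by (intro INF_cong) auto
  ultimately have "zone_region \<gamma> (lab ` K) (lab ` Z) = (\<Inter>k\<in>Z. R k) \<inter> (\<Inter>k\<in>K - Z. - R k)"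
    unfolding zone_region_def by (simp add: image_image)
  then show ?thesis
    using assms(2) by auto
qed

lemma realizes_regions:
  assumes "inj_on lab K"
    and closed: "\<And>k. k \<in> K \<Longrightarrow>
      simple_path (\<gamma> (lab k)) \<and> pathfinish (\<gamma> (lab k)) = pathstart (\<gamma> (lab k))"
    and inside: "\<And>k. k \<in> K \<Longrightarrow> inside (path_image (\<gamma> (lab k))) = R k"
  shows "realizes \<gamma> (lab ` K, (\<lambda>p. lab ` {k\<in>K. p \<in> R k}) ` UNIV)"
proof -
  have zone_region: "zone_region \<gamma> (lab ` K) (lab ` Z) = {p. {k\<in>K. p \<in> R k} = Z}" if "Z \<subseteq> K" for Z
    using assms(1) that inside by (rule zone_region_of_regions)
  have "{Z'. Z' \<subseteq> lab ` K \<and> zone_region \<gamma> (lab ` K) Z' \<noteq> {}} = (\<lambda>p. lab ` {k\<in>K. p \<in> R k}) ` UNIV"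
  proof (intro set_eqI iffI)
    fix Z' assume "Z' \<in> {Z'. Z' \<subseteq> lab ` K \<and> zone_region \<gamma> (lab ` K) Z' \<noteq> {}}"
    then obtain Z where "Z \<subseteq> K" "Z' = lab ` Z" "zone_region \<gamma> (lab ` K) (lab ` Z) \<noteq> {}"
      by (auto simp: subset_image_iff)
    then show "Z' \<in> (\<lambda>p. lab ` {k\<in>K. p \<in> R k}) ` UNIV"
      using zone_region by auto
  next
    fix Z' assume "Z' \<in> (\<lambda>p. lab ` {k\<in>K. p \<in> R k}) ` UNIV"
    then obtain p where "Z' = lab ` {k\<in>K. p \<in> R k}"
      by auto
    then show "Z' \<in> {Z'. Z' \<subseteq> lab ` K \<and> zone_region \<gamma> (lab ` K) Z' \<noteq> {}}"
      using zone_region[of "{k\<in>K. p \<in> R k}"] by auto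
  qed
  then show ?thesis
    unfolding realizes_def using closed by auto
qed

lemma well_formed_if_convex_regions:
  fixes R :: "'k \<Rightarrow> complex set" and lab :: "'k \<Rightarrow> nat"
  assumes "finite K" "inj_on lab K"
    and regions: "\<And>k. k \<in> K \<Longrightarrow> open (R k) \<and> bounded (R k) \<and> convex (R k) \<and> R k \<noteq> {}"
    and crossings: "\<And>k k'. k \<in> K \<Longrightarrow> k' \<in> K \<Longrightarrow> k \<noteq> k' \<Longrightarrow> finite (frontier (R k) \<inter> frontier (R k'))"
    and at_most_double: "\<And>p. card {k\<in>K. p \<in> frontier (R k)} \<le> 2"
    and zones_connected: "\<And>p. connected {q. {k\<in>K. q \<in> R k} = {k\<in>K. p \<in> R k}}"
  shows "well_formed (lab ` K, (\<lambda>p. lab ` {k\<in>K. p \<in> R k}) ` UNIV)"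
proof -
  have "\<exists>g. simple_path g \<and> pathfinish g = pathstart g \<and>
      path_image g = frontier (R k) \<and> inside (path_image g) = R k" if k: "k \<in> K" for k
  proof -
    obtain g where "simple_path g" "pathfinish g = pathstart g"
      "path_image g = frontier (R k)" "inside (path_image g) = R k"
      by (rule simple_closed_path_around_convex) (use regions[OF k] in auto)
    then show ?thesis
      by blast
  qed
  then obtain g where g: "\<And>k. k \<in> K \<Longrightarrow> simple_path (g k) \<and> pathfinish (g k) = pathstart (g k) \<and>
      path_image (g k) = frontier (R k) \<and> inside (path_image (g k)) = R k"
    by metis
  define \<gamma> where "\<gamma> = g \<circ> inv_into K lab"
  have \<gamma>: "simple_path (\<gamma> (lab k)) \<and> pathfinish (\<gamma> (lab k)) = pathstart (\<gamma> (lab k)) \<and>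
      path_image (\<gamma> (lab k)) = frontier (R k) \<and> inside (path_image (\<gamma> (lab k))) = R k"
    if "k \<in> K" for k
  proof -
    have "\<gamma> (lab k) = g k"
      using assms(2) that by (simp add: \<gamma>_def)
    then show ?thesis
      using g[OF that] by metis
  qed
  have inside: "inside (path_image (\<gamma> (lab k))) = R k" if "k \<in> K" for k
    using \<gamma>[OF that] by blast
  have "realizes \<gamma> (lab ` K, (\<lambda>p. lab ` {k\<in>K. p \<in> R k}) ` UNIV)"
    using assms(2) \<gamma> inside by (intro realizes_regions[where \<gamma> = \<gamma> and lab = lab and R = R]) blast+
  moreover have "finite (path_image (\<gamma> l) \<inter> path_image (\<gamma> l'))"
    if l: "l \<in> lab ` K" "l' \<in> lab ` K" "l \<noteq> l'" for l l'
  proof -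
    obtain k k' where "k \<in> K" "k' \<in> K" "l = lab k" "l' = lab k'"
      using l by blast
    then show ?thesis
      using l(3) crossings \<gamma> by auto
  qed
  moreover have "card {l\<in>lab ` K. p \<in> path_image (\<gamma> l)} \<le> 2" for p
  proof -
    have "{l\<in>lab ` K. p \<in> path_image (\<gamma> l)} = lab ` {k\<in>K. p \<in> frontier (R k)}"
      using \<gamma> by auto
    then show ?thesis
      using card_image_le[of "{k\<in>K. p \<in> frontier (R k)}" lab] assms(1) at_most_double[of p]
      by simp
  qed
  moreover have "connected (zone_region \<gamma> (lab ` K) Z)"
    if "Z \<in> (\<lambda>p. lab ` {k\<in>K. p \<in> R k}) ` UNIV" for Z
    using that zones_connected
      zone_region_of_regions[where \<gamma> = \<gamma> and lab = lab and R = R, OF assms(2) _ inside]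
    by auto
  ultimately have "well_formed_realization \<gamma> (lab ` K, (\<lambda>p. lab ` {k\<in>K. p \<in> R k}) ` UNIV)"
    unfolding well_formed_realization_def fst_conv snd_conv by blast
  then show ?thesis
    unfolding well_formed_def fst_conv using assms(1) by blast
qed

section \<open>A rectangle diagram of combs\<close>

definition rect :: "real \<Rightarrow> real \<Rightarrow> real \<Rightarrow> real \<Rightarrow> complex set" where
  "rect x1 x2 y1 y2 = box (Complex x1 y1) (Complex x2 y2)"

lemma mem_rect: "p \<in> rect x1 x2 y1 y2 \<longleftrightarrow> x1 < Re p \<and> Re p < x2 \<and> y1 < Im p \<and> Im p < y2"
  by (simp add: rect_def in_box_complex_iff)

lemma rect_nonempty:
  assumes "x1 < x2" "y1 < y2"
  shows "rect x1 x2 y1 y2 \<noteq> {}"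
proof -
  have "Complex ((x1 + x2) / 2) ((y1 + y2) / 2) \<in> rect x1 x2 y1 y2"
    using assms by (simp add: mem_rect)
  then show ?thesis
    by blast
qed

lemma closure_rect:
  assumes "x1 < x2" "y1 < y2"
  shows "closure (rect x1 x2 y1 y2) = {p. x1 \<le> Re p \<and> Re p \<le> x2 \<and> y1 \<le> Im p \<and> Im p \<le> y2}"
  using rect_nonempty[OF assms] by (auto simp: rect_def in_cbox_complex_iff)

lemma vertical_segment_bounds:
  assumes "u \<in> closed_segment p (Complex (Re p) y)"
  shows "Re u = Re p \<and> min (Im p) y \<le> Im u \<and> Im u \<le> max (Im p) y"
  using assms by (auto simp: closed_segment_same_Re closed_segment_eq_real_ivl split: if_splits)

lemma connected_if_segments_reach:
  fixes S T :: "'a::real_normed_vector set"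
  assumes "connected T" "T \<subseteq> S" "\<And>x. x \<in> S \<Longrightarrow> \<exists>z\<in>T. closed_segment x z \<subseteq> S"
  shows "connected S"
proof (cases "T = {}")
  case True
  then show ?thesis
    using assms(3) by (metis connected_empty empty_iff subsetI subset_empty)
next
  case False
  then obtain t0 where "t0 \<in> T"
    by blast
  let ?pieces = "{closed_segment x z \<union> T | x z. z \<in> T \<and> closed_segment x z \<subseteq> S}"
  have "connected (\<Union>?pieces)"
  proof (rule connected_Union)
    show "connected P" if "P \<in> ?pieces" for P
      using that assms(1) by (auto intro!: connected_Un)
    show "\<Inter>?pieces \<noteq> {}"
      using \<open>t0 \<in> T\<close> by blast
  qed
  moreover have "\<Union>?pieces = S"
  proof
    show "\<Union>?pieces \<subseteq> S"
      using assms(2) by blast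
    show "S \<subseteq> \<Union>?pieces"
    proof
      fix x assume "x \<in> S"
      then obtain z where "z \<in> T" "closed_segment x z \<subseteq> S"
        using assms(3) by blast
      then show "x \<in> \<Union>?pieces"
        by blast
    qed
  qed
  ultimately show ?thesis
    by simp
qed

datatype comb_part = Outer | Bar nat | Tooth nat nat

context
  fixes m t :: nat
begin

definition comb_parts :: "comb_part set" where
  "comb_parts = insert Outer (Bar ` {..<m} \<union> case_prod Tooth ` ({..<m} \<times> {..<t}))"

definition bar_left :: "nat \<Rightarrow> real" where
  "bar_left i = real ((2 * t + 2) * i + 1)"

definition bar_right :: "nat \<Rightarrow> real" where
  "bar_right i = real ((2 * t + 2) * (i + 1))"

definition tooth_left :: "nat \<Rightarrow> nat \<Rightarrow> real" where
  "tooth_left i j = real ((2 * t + 2) * i + 2 * j + 2)"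

definition outer_right :: real where
  "outer_right = real ((2 * t + 2) * m + 1)"

fun comb_region :: "comb_part \<Rightarrow> complex set" where
  "comb_region Outer = rect 0 outer_right 0 5"
| "comb_region (Bar i) = rect (bar_left i) (bar_right i) 1 3"
| "comb_region (Tooth i j) = rect (tooth_left i j) (tooth_left i j + 1) 2 4"

declare comb_region.simps [simp del]

lemma mem_comb_region:
  "p \<in> comb_region Outer \<longleftrightarrow> 0 < Re p \<and> Re p < outer_right \<and> 0 < Im p \<and> Im p < 5"
  "p \<in> comb_region (Bar i) \<longleftrightarrow> bar_left i < Re p \<and> Re p < bar_right i \<and> 1 < Im p \<and> Im p < 3"
  "p \<in> comb_region (Tooth i j) \<longleftrightarrow>
     tooth_left i j < Re p \<and> Re p < tooth_left i j + 1 \<and> 2 < Im p \<and> Im p < 4"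
  by (simp_all add: comb_region.simps mem_rect)

lemma bars_apart: "i < k \<Longrightarrow> bar_right i < bar_left k"
proof -
  assume "i < k"
  then have "(2 * t + 2) * (i + 1) \<le> (2 * t + 2) * k"
    by (intro mult_le_mono2) simp
  then show ?thesis
    unfolding bar_left_def bar_right_def by linarith
qed

lemma tooth_inside_bar: "j < t \<Longrightarrow> bar_left i < tooth_left i j \<and> tooth_left i j + 1 < bar_right i"
  unfolding bar_left_def bar_right_def tooth_left_def by simp

lemma teeth_apart: "j < l \<Longrightarrow> tooth_left i j + 1 < tooth_left i l"
  unfolding tooth_left_def by simp

lemma bar_inside_outer: "i < m \<Longrightarrow> 1 \<le> bar_left i \<and> bar_right i < outer_right"
proof -
  assume "i < m"
  then have "(2 * t + 2) * (i + 1) \<le> (2 * t + 2) * m"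
    by (intro mult_le_mono2) simp
  then show ?thesis
    unfolding bar_left_def bar_right_def outer_right_def by linarith
qed

lemma bar_wide: "bar_left i + 1 \<le> bar_right i"
  unfolding bar_left_def bar_right_def by simp

lemma outer_right_ge_1: "1 \<le> outer_right"
  unfolding outer_right_def by simp

lemma closure_comb_region:
  "closure (comb_region Outer) = {p. 0 \<le> Re p \<and> Re p \<le> outer_right \<and> 0 \<le> Im p \<and> Im p \<le> 5}"
  "closure (comb_region (Bar i)) =
     {p. bar_left i \<le> Re p \<and> Re p \<le> bar_right i \<and> 1 \<le> Im p \<and> Im p \<le> 3}"
  "closure (comb_region (Tooth i j)) =
     {p. tooth_left i j \<le> Re p \<and> Re p \<le> tooth_left i j + 1 \<and> 2 \<le> Im p \<and> Im p \<le> 4}"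
  using outer_right_ge_1 bar_wide[of i] by (simp_all add: comb_region.simps closure_rect)

lemma closure_comb_region_inside_Outer:
  assumes "k \<in> comb_parts" "k \<noteq> Outer"
  shows "closure (comb_region k) \<subseteq> comb_region Outer"
proof -
  obtain i j where "k = Bar i \<and> i < m \<or> k = Tooth i j \<and> i < m \<and> j < t"
    using assms unfolding comb_parts_def by auto
  then show ?thesis
    using bar_inside_outer[of i] tooth_inside_bar[of j i]
    by (auto simp: closure_comb_region mem_comb_region)
qed

lemma bars_separated: "i \<noteq> k \<Longrightarrow> bar_right i < bar_left k \<or> bar_right k < bar_left i"
  using bars_apart by (metis nat_neq_iff)

lemma closure_comb_region_Bar_unique:
  assumes "p \<in> closure (comb_region (Bar i))" "p \<in> closure (comb_region (Bar k))"
  shows "i = k"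
proof (rule ccontr)
  assume "i \<noteq> k"
  then show False
    using bars_separated[OF \<open>i \<noteq> k\<close>] assms by (auto simp: closure_comb_region; linarith)
qed

lemma closure_comb_region_Tooth_Bar_unique:
  assumes "p \<in> closure (comb_region (Tooth i j))" "p \<in> closure (comb_region (Bar k))" "j < t"
  shows "i = k"
proof (rule ccontr)
  assume "i \<noteq> k"
  then show False
    using bars_separated[OF \<open>i \<noteq> k\<close>] tooth_inside_bar[OF assms(3), of i] assms(1,2)
    by (auto simp: closure_comb_region; linarith)
qed

lemma closure_comb_region_Tooth_unique:
  assumes "p \<in> closure (comb_region (Tooth i j))" "p \<in> closure (comb_region (Tooth k l))"
    and "j < t" "l < t"
  shows "i = k \<and> j = l"
proof -
  have "i = k"
  proof (rule ccontr)
    assume "i \<noteq> k"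
    then show False
      using bars_separated[OF \<open>i \<noteq> k\<close>] tooth_inside_bar[OF assms(3), of i]
        tooth_inside_bar[OF assms(4), of k] assms(1,2)
      by (auto simp: closure_comb_region; linarith)
  qed
  moreover have "j = l"
  proof (rule ccontr)
    assume "j \<noteq> l"
    then have "tooth_left i j + 1 < tooth_left i l \<or> tooth_left i l + 1 < tooth_left i j"
      using teeth_apart by (metis nat_neq_iff)
    then show False
      using assms(1,2) \<open>i = k\<close> by (auto simp: closure_comb_region; linarith)
  qed
  ultimately show ?thesis ..
qed

lemma mem_comb_parts [simp]:
  "Outer \<in> comb_parts"
  "Bar i \<in> comb_parts \<longleftrightarrow> i < m"
  "Tooth i j \<in> comb_parts \<longleftrightarrow> i < m \<and> j < t"
  unfolding comb_parts_def by auto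

lemma comb_region_inside_Outer: "p \<in> comb_region k \<Longrightarrow> k \<in> comb_parts \<Longrightarrow> p \<in> comb_region Outer"
  using closure_comb_region_inside_Outer closure_subset by (cases "k = Outer") auto

lemma comb_region_Bar_unique: "p \<in> comb_region (Bar i) \<Longrightarrow> p \<in> comb_region (Bar k) \<Longrightarrow> i = k"
  using closure_comb_region_Bar_unique closure_subset by blast

lemma comb_region_Tooth_Bar_unique:
  "p \<in> comb_region (Tooth i j) \<Longrightarrow> p \<in> comb_region (Bar k) \<Longrightarrow> j < t \<Longrightarrow> i = k"
  using closure_comb_region_Tooth_Bar_unique closure_subset by blast

lemma comb_region_Tooth_unique:
  "p \<in> comb_region (Tooth i j) \<Longrightarrow> p \<in> comb_region (Tooth k l) \<Longrightarrow> j < t \<Longrightarrow> l < t \<Longrightarrow>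
    i = k \<and> j = l"
  using closure_comb_region_Tooth_unique closure_subset by blast

definition comb_zone :: "complex \<Rightarrow> comb_part set" where
  "comb_zone p = {k\<in>comb_parts. p \<in> comb_region k}"

definition comb_part_zones :: "comb_part set set" where
  "comb_part_zones =
     {{}, {Outer}} \<union> (\<lambda>i. {Outer, Bar i}) ` {..<m} \<union>
     (\<lambda>(i, j). {Outer, Bar i, Tooth i j}) ` ({..<m} \<times> {..<t}) \<union>
     (\<lambda>(i, j). {Outer, Tooth i j}) ` ({..<m} \<times> {..<t})"

lemma comb_zone_eq_iff:
  assumes "Z \<subseteq> comb_parts"
  shows "comb_zone p = Z \<longleftrightarrow> (p \<in> comb_region Outer \<longleftrightarrow> Outer \<in> Z) \<and>
    (\<forall>i<m. p \<in> comb_region (Bar i) \<longleftrightarrow> Bar i \<in> Z) \<and>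
    (\<forall>i<m. \<forall>j<t. p \<in> comb_region (Tooth i j) \<longleftrightarrow> Tooth i j \<in> Z)"
proof -
  have "comb_zone p = Z \<longleftrightarrow> (\<forall>k\<in>comb_parts. p \<in> comb_region k \<longleftrightarrow> k \<in> Z)"
    using assms unfolding comb_zone_def by auto
  then show ?thesis
    unfolding comb_parts_def by auto
qed

lemma comb_zone_eq_empty: "comb_zone p = {} \<longleftrightarrow> p \<notin> comb_region Outer"
  by (auto simp: comb_zone_eq_iff dest: comb_region_inside_Outer)

lemma comb_zone_eq_Outer:
  "comb_zone p = {Outer} \<longleftrightarrow> p \<in> comb_region Outer \<and> (\<forall>i<m. p \<notin> comb_region (Bar i)) \<and>
     (\<forall>i<m. \<forall>j<t. p \<notin> comb_region (Tooth i j))"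
  by (simp add: comb_zone_eq_iff)

lemma comb_zone_eq_Bar:
  assumes "i < m"
  shows "comb_zone p = {Outer, Bar i} \<longleftrightarrow>
    p \<in> comb_region (Bar i) \<and> (\<forall>j<t. p \<notin> comb_region (Tooth i j))"
  using assms
  by (auto simp: comb_zone_eq_iff dest: comb_region_inside_Outer comb_region_Bar_unique
      comb_region_Tooth_Bar_unique comb_region_Tooth_unique)

lemma comb_zone_eq_Bar_Tooth:
  assumes "i < m" "j < t"
  shows "comb_zone p = {Outer, Bar i, Tooth i j} \<longleftrightarrow>
    p \<in> comb_region (Bar i) \<and> p \<in> comb_region (Tooth i j)"
  using assms
  by (auto simp: comb_zone_eq_iff dest: comb_region_inside_Outer comb_region_Bar_unique
      comb_region_Tooth_Bar_unique comb_region_Tooth_unique)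

lemma comb_zone_eq_Tooth:
  assumes "i < m" "j < t"
  shows "comb_zone p = {Outer, Tooth i j} \<longleftrightarrow>
    p \<in> comb_region (Tooth i j) \<and> p \<notin> comb_region (Bar i)"
  using assms
  by (auto simp: comb_zone_eq_iff dest: comb_region_inside_Outer comb_region_Bar_unique
      comb_region_Tooth_Bar_unique comb_region_Tooth_unique)

lemma comb_zone_in_comb_part_zones: "comb_zone p \<in> comb_part_zones"
proof -
  consider (outside) "p \<notin> comb_region Outer"
    | (bar_tooth) i j where "i < m" "j < t" "p \<in> comb_region (Bar i)" "p \<in> comb_region (Tooth i j)"
    | (bar) i where "i < m" "p \<in> comb_region (Bar i)" "\<forall>j<t. p \<notin> comb_region (Tooth i j)"
    | (tooth) i j where "i < m" "j < t" "p \<in> comb_region (Tooth i j)" "p \<notin> comb_region (Bar i)"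
    | (plain) "p \<in> comb_region Outer" "\<forall>i<m. p \<notin> comb_region (Bar i)"
        "\<forall>i<m. \<forall>j<t. p \<notin> comb_region (Tooth i j)"
    by blast
  then show ?thesis
  proof cases
    case outside
    then show ?thesis
      using comb_zone_eq_empty by (simp add: comb_part_zones_def)
  next
    case (bar_tooth i j)
    then have "comb_zone p = {Outer, Bar i, Tooth i j}"
      using comb_zone_eq_Bar_Tooth by simp
    then show ?thesis
      using bar_tooth by (force simp: comb_part_zones_def)
  next
    case (bar i)
    then have "comb_zone p = {Outer, Bar i}"
      using comb_zone_eq_Bar by simp
    then show ?thesis
      using bar by (force simp: comb_part_zones_def)
  next
    case (tooth i j)
    then have "comb_zone p = {Outer, Tooth i j}"
      using comb_zone_eq_Tooth by simp
    then show ?thesis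
      using tooth by (force simp: comb_part_zones_def)
  next
    case plain
    then show ?thesis
      using comb_zone_eq_Outer by (simp add: comb_part_zones_def)
  qed
qed

lemma range_comb_zone: "range comb_zone = comb_part_zones"
proof
  show "range comb_zone \<subseteq> comb_part_zones"
    using comb_zone_in_comb_part_zones by blast
  have "comb_zone (Complex (-1) 0) = {}"
    by (simp add: comb_zone_eq_empty mem_comb_region)
  moreover have "comb_zone (Complex (1/2) (1/2)) = {Outer}"
    using outer_right_ge_1 bar_inside_outer by (force simp: comb_zone_eq_Outer mem_comb_region)
  moreover have "{Outer, Bar i} \<in> range comb_zone" if "i < m" for i
  proof -
    have "comb_zone (Complex (bar_left i + 1/2) (3/2)) = {Outer, Bar i}"
      using that bar_wide[of i] by (simp add: comb_zone_eq_Bar mem_comb_region)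
    then show ?thesis
      by (metis rangeI)
  qed
  moreover have "{Outer, Bar i, Tooth i j} \<in> range comb_zone" if "i < m" "j < t" for i j
  proof -
    have "comb_zone (Complex (tooth_left i j + 1/2) (5/2)) = {Outer, Bar i, Tooth i j}"
      using that tooth_inside_bar[of j i] by (simp add: comb_zone_eq_Bar_Tooth mem_comb_region)
    then show ?thesis
      by (metis rangeI)
  qed
  moreover have "{Outer, Tooth i j} \<in> range comb_zone" if "i < m" "j < t" for i j
  proof -
    have "comb_zone (Complex (tooth_left i j + 1/2) (7/2)) = {Outer, Tooth i j}"
      using that by (simp add: comb_zone_eq_Tooth mem_comb_region)
    then show ?thesis
      by (metis rangeI)
  qed
  ultimately show "comb_part_zones \<subseteq> range comb_zone"
    unfolding comb_part_zones_def by (auto intro: range_eqI[symmetric])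
qed

lemma convex_comb_region: "convex (comb_region k)"
  by (cases k) (simp_all add: comb_region.simps rect_def convex_box)

lemma connected_comb_zone_empty: "connected {p. comb_zone p = {}}"
proof -
  have "bounded (comb_region Outer)"
    by (simp add: comb_region.simps rect_def bounded_box)
  then have "connected (- comb_region Outer)"
    using convex_comb_region by (intro connected_complement_bounded_convex) simp_all
  then show ?thesis
    by (simp add: comb_zone_eq_empty Compl_eq)
qed

(* Points of the zone {Outer} reach the hub by a vertical segment: upwards above a bar,
   downwards elsewhere. *)
definition outer_hub :: "complex set" where
  "outer_hub = comb_region Outer \<inter> ({q. Im q \<le> 1} \<union> {q. Re q \<le> 1} \<union> {q. 4 \<le> Im q})"

lemma connected_outer_hub: "connected outer_hub"
proof -
  define bottom where "bottom = comb_region Outer \<inter> {q. Im q \<le> 1}"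
  define left where "left = comb_region Outer \<inter> {q. Re q \<le> 1}"
  define top where "top = comb_region Outer \<inter> {q. 4 \<le> Im q}"
  have "connected bottom" "connected left" "connected top"
    unfolding bottom_def left_def top_def using convex_comb_region
    by (auto intro!: convex_connected convex_Int convex_halfspace_Im_le convex_halfspace_Re_le
        convex_halfspace_Im_ge)
  moreover have "Complex (1/2) (1/2) \<in> bottom \<inter> left" "Complex (1/2) (9/2) \<in> left \<inter> top"
    using outer_right_ge_1 by (simp_all add: bottom_def left_def top_def mem_comb_region)
  ultimately have "connected (bottom \<union> left \<union> top)"
    by (intro connected_Un) blast+
  then show ?thesis
    unfolding outer_hub_def bottom_def left_def top_def by (simp add: Int_Un_distrib)
qed

lemma outer_hub_subset: "outer_hub \<subseteq> {p. comb_zone p = {Outer}}"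
proof
  fix q assume q: "q \<in> outer_hub"
  have "q \<notin> comb_region (Bar i)" if "i < m" for i
    using q bar_inside_outer[OF that] by (auto simp: outer_hub_def mem_comb_region)
  moreover have "q \<notin> comb_region (Tooth i j)" if "i < m" "j < t" for i j
    using q bar_inside_outer[OF that(1)] tooth_inside_bar[OF that(2), of i]
    by (auto simp: outer_hub_def mem_comb_region)
  ultimately show "q \<in> {p. comb_zone p = {Outer}}"
    using q by (simp add: outer_hub_def comb_zone_eq_Outer)
qed

lemma segment_up_in_outer_zone:
  assumes x: "comb_zone x = {Outer}" "3 \<le> Im x" "Im x < 4"
  shows "closed_segment x (Complex (Re x) (9/2)) \<subseteq> {p. comb_zone p = {Outer}}"
proof
  fix u assume "u \<in> closed_segment x (Complex (Re x) (9/2))"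
  then have u: "Re u = Re x" "Im x \<le> Im u" "Im u \<le> 9/2"
    using vertical_segment_bounds x(3) by fastforce+
  have "u \<notin> comb_region (Tooth i j)" if "i < m" "j < t" for i j
    using x that u by (auto simp: comb_zone_eq_Outer mem_comb_region)
  then show "u \<in> {p. comb_zone p = {Outer}}"
    using x u by (auto simp: comb_zone_eq_Outer mem_comb_region)
qed

lemma segment_down_in_outer_zone:
  assumes x: "comb_zone x = {Outer}" "\<forall>i<m. \<not> (bar_left i < Re x \<and> Re x < bar_right i)"
  shows "closed_segment x (Complex (Re x) (1/2)) \<subseteq> {p. comb_zone p = {Outer}}"
proof
  fix u assume "u \<in> closed_segment x (Complex (Re x) (1/2))"
  then have u: "Re u = Re x" "min (Im x) (1/2) \<le> Im u" "Im u \<le> max (Im x) (1/2)"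
    using vertical_segment_bounds by fastforce+
  have "u \<notin> comb_region (Tooth i j)" if "i < m" "j < t" for i j
    using x(2) that u tooth_inside_bar[of j i] by (force simp: mem_comb_region)
  then show "u \<in> {p. comb_zone p = {Outer}}"
    using x u by (auto simp: comb_zone_eq_Outer mem_comb_region)
qed

lemma outer_zone_reaches_hub:
  assumes x: "comb_zone x = {Outer}"
  shows "\<exists>z\<in>outer_hub. closed_segment x z \<subseteq> {p. comb_zone p = {Outer}}"
proof (cases "x \<in> outer_hub")
  case True
  then show ?thesis
    using x by (intro bexI[of _ x]) auto
next
  case False
  have x_parts: "x \<in> comb_region Outer" "\<forall>i<m. x \<notin> comb_region (Bar i)"
    using x by (simp_all add: comb_zone_eq_Outer)
  then have x_mid: "1 < Im x" "Im x < 4"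
    using False by (auto simp: outer_hub_def)
  have "Complex (Re x) (9/2) \<in> outer_hub" "Complex (Re x) (1/2) \<in> outer_hub"
    using x_parts by (simp_all add: outer_hub_def mem_comb_region)
  moreover have "3 \<le> Im x" if "\<exists>i<m. bar_left i < Re x \<and> Re x < bar_right i"
    using that x_parts x_mid by (auto simp: mem_comb_region)
  ultimately show ?thesis
    using segment_up_in_outer_zone[OF x _ x_mid(2)] segment_down_in_outer_zone[OF x] by blast
qed

lemma connected_comb_zone_Outer: "connected {p. comb_zone p = {Outer}}"
  using connected_outer_hub outer_hub_subset outer_zone_reaches_hub
  by (rule connected_if_segments_reach) simp

lemma connected_comb_zone_Bar:
  assumes "i < m"
  shows "connected {p. comb_zone p = {Outer, Bar i}}"
proof (rule connected_if_segments_reach)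
  let ?hub = "comb_region (Bar i) \<inter> {q. Im q \<le> 2}"
  show "connected ?hub"
    using convex_comb_region by (intro convex_connected convex_Int convex_halfspace_Im_le)
  show "?hub \<subseteq> {p. comb_zone p = {Outer, Bar i}}"
    using assms by (auto simp: comb_zone_eq_Bar mem_comb_region)
  fix x assume "x \<in> {p. comb_zone p = {Outer, Bar i}}"
  then have x: "x \<in> comb_region (Bar i)" "\<forall>j<t. x \<notin> comb_region (Tooth i j)"
    using assms by (simp_all add: comb_zone_eq_Bar)
  let ?z = "Complex (Re x) (3/2)"
  have "?z \<in> ?hub"
    using x by (simp add: mem_comb_region)
  moreover have "comb_zone u = {Outer, Bar i}" if "u \<in> closed_segment x ?z" for u
  proof -
    have u: "Re u = Re x" "min (Im x) (3/2) \<le> Im u" "Im u \<le> max (Im x) (3/2)"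
      using vertical_segment_bounds[OF that] by auto
    then have "u \<in> comb_region (Bar i)"
      using x by (auto simp: mem_comb_region)
    moreover have "u \<notin> comb_region (Tooth i j)" if "j < t" for j
      using x that u by (auto simp: mem_comb_region)
    ultimately show ?thesis
      using assms by (simp add: comb_zone_eq_Bar)
  qed
  ultimately show "\<exists>z\<in>?hub. closed_segment x z \<subseteq> {p. comb_zone p = {Outer, Bar i}}"
    by blast
qed

lemma connected_comb_zone_Bar_Tooth:
  assumes "i < m" "j < t"
  shows "connected {p. comb_zone p = {Outer, Bar i, Tooth i j}}"
proof -
  have "{p. comb_zone p = {Outer, Bar i, Tooth i j}} =
      comb_region (Bar i) \<inter> comb_region (Tooth i j)"
    using assms by (auto simp: comb_zone_eq_Bar_Tooth)
  then show ?thesis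
    using convex_comb_region by (simp add: convex_connected convex_Int)
qed

lemma connected_comb_zone_Tooth:
  assumes "i < m" "j < t"
  shows "connected {p. comb_zone p = {Outer, Tooth i j}}"
proof -
  have "{p. comb_zone p = {Outer, Tooth i j}} = comb_region (Tooth i j) \<inter> {q. 3 \<le> Im q}"
    using assms tooth_inside_bar[OF assms(2), of i]
    by (auto simp: comb_zone_eq_Tooth mem_comb_region)
  then show ?thesis
    using convex_comb_region by (simp add: convex_connected convex_Int convex_halfspace_Im_ge)
qed

lemma connected_comb_zone: "connected {q. comb_zone q = comb_zone p}"
  using comb_zone_in_comb_part_zones[of p] connected_comb_zone_empty connected_comb_zone_Outer
    connected_comb_zone_Bar connected_comb_zone_Bar_Tooth connected_comb_zone_Tooth
  by (auto simp: comb_part_zones_def)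

lemma frontier_comb_region: "frontier (comb_region k) = closure (comb_region k) - comb_region k"
  by (cases k) (simp_all add: comb_region.simps frontier_def interior_open[OF open_box] rect_def)

lemma frontier_Bar_Tooth:
  assumes "j < t"
  shows "frontier (comb_region (Bar i)) \<inter> frontier (comb_region (Tooth i j)) \<subseteq>
    {Complex (tooth_left i j) 3, Complex (tooth_left i j + 1) 3}"
proof
  fix p assume p: "p \<in> frontier (comb_region (Bar i)) \<inter> frontier (comb_region (Tooth i j))"
  have "Im p = 3"
    using p tooth_inside_bar[OF assms, of i]
    by (auto simp: frontier_comb_region closure_comb_region mem_comb_region)
  moreover have "Re p = tooth_left i j \<or> Re p = tooth_left i j + 1"
    using p \<open>Im p = 3\<close> by (auto simp: frontier_comb_region closure_comb_region mem_comb_region)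
  ultimately show "p \<in> {Complex (tooth_left i j) 3, Complex (tooth_left i j + 1) 3}"
    by (auto simp: complex_eq_iff)
qed

lemma frontiers_meet_only_bar_and_own_tooth:
  assumes "k \<in> comb_parts" "k' \<in> comb_parts" "k \<noteq> k'"
    and "p \<in> frontier (comb_region k)" "p \<in> frontier (comb_region k')"
  shows "\<exists>i j. j < t \<and> (k = Bar i \<and> k' = Tooth i j \<or> k = Tooth i j \<and> k' = Bar i)"
proof -
  have closures: "p \<in> closure (comb_region k)" "p \<in> closure (comb_region k')"
    using assms(4,5) by (simp_all add: frontier_comb_region)
  have "p \<notin> comb_region Outer" if "Outer \<in> {k, k'}"
    using that assms(4,5) by (auto simp: frontier_comb_region)
  moreover have "p \<in> comb_region Outer" if "k \<noteq> Outer"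
    using closure_comb_region_inside_Outer[OF assms(1) that] closures(1) by blast
  moreover have "p \<in> comb_region Outer" if "k' \<noteq> Outer"
    using closure_comb_region_inside_Outer[OF assms(2) that] closures(2) by blast
  ultimately have "k \<noteq> Outer" "k' \<noteq> Outer"
    using assms(3) by auto
  then show ?thesis
    using assms(1-3) closures
    by (cases k; cases k')
      (auto dest: closure_comb_region_Bar_unique closure_comb_region_Tooth_Bar_unique
        closure_comb_region_Tooth_unique)
qed

lemma finite_frontier_crossings:
  assumes "k \<in> comb_parts" "k' \<in> comb_parts" "k \<noteq> k'"
  shows "finite (frontier (comb_region k) \<inter> frontier (comb_region k'))"
proof (cases "frontier (comb_region k) \<inter> frontier (comb_region k') = {}")
  case False
  then obtain i j where "j < t" "k = Bar i \<and> k' = Tooth i j \<or> k = Tooth i j \<and> k' = Bar i"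
    using frontiers_meet_only_bar_and_own_tooth[OF assms] by blast
  then show ?thesis
    using frontier_Bar_Tooth[of j i] by (auto simp: Int_commute intro: finite_subset)
qed simp

lemma card_frontiers_through_point: "card {k\<in>comb_parts. p \<in> frontier (comb_region k)} \<le> 2"
proof -
  let ?S = "{k\<in>comb_parts. p \<in> frontier (comb_region k)}"
  have "\<exists>u v. ?S \<subseteq> {u, v}"
  proof (cases "\<exists>x\<in>?S. \<exists>y\<in>?S. x \<noteq> y")
    case True
    then obtain x y where xy: "x \<in> ?S" "y \<in> ?S" "x \<noteq> y"
      by blast
    have "z \<in> {x, y}" if "z \<in> ?S" for z
    proof (rule ccontr)
      assume "z \<notin> {x, y}"
      then show False
        using frontiers_meet_only_bar_and_own_tooth[of x y p] xy that
          frontiers_meet_only_bar_and_own_tooth[of x z p]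
          frontiers_meet_only_bar_and_own_tooth[of y z p]
        by auto
    qed
    then show ?thesis
      by blast
  qed blast
  then obtain u v where "?S \<subseteq> {u, v}"
    by blast
  then have "card ?S \<le> card {u, v}"
    by (intro card_mono) simp_all
  also have "\<dots> \<le> 2"
    by (simp add: card_insert_if)
  finally show ?thesis .
qed

lemma comb_region_nonempty: "comb_region k \<noteq> {}"
proof (cases k)
  case (Bar i)
  then show ?thesis
    using bar_wide[of i] by (simp add: comb_region.simps rect_nonempty)
qed (use outer_right_ge_1 in \<open>simp_all add: comb_region.simps rect_nonempty\<close>)

lemma comb_region_open_bounded_convex:
  "open (comb_region k) \<and> bounded (comb_region k) \<and> convex (comb_region k) \<and> comb_region k \<noteq> {}"
proof -
  have "open (comb_region k) \<and> bounded (comb_region k)"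
    by (cases k) (simp_all add: comb_region.simps rect_def open_box bounded_box)
  then show ?thesis
    using convex_comb_region comb_region_nonempty by blast
qed

lemma well_formed_comb:
  assumes "inj_on lab comb_parts"
  shows "well_formed (lab ` comb_parts, (`) lab ` comb_part_zones)"
proof -
  have "well_formed (lab ` comb_parts, (\<lambda>p. lab ` comb_zone p) ` UNIV)"
    unfolding comb_zone_def
  proof (rule well_formed_if_convex_regions[OF _ assms])
    show "finite comb_parts"
      unfolding comb_parts_def by simp
  qed (use comb_region_open_bounded_convex finite_frontier_crossings card_frontiers_through_point
      connected_comb_zone[unfolded comb_zone_def] in auto)
  moreover have "(\<lambda>p. lab ` comb_zone p) ` UNIV = (`) lab ` comb_part_zones"
    unfolding range_comb_zone[symmetric] image_image ..
  ultimately show ?thesis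
    by simp
qed

lemma k_ind_pierced_comb_parts:
  assumes "inj_on lab comb_parts"
  shows "k_ind_pierced 1 (lab ` comb_parts, (`) lab ` comb_part_zones)"
proof -
  define A where "A = lab ` Bar ` {..<m}"
  define T where "T = (\<lambda>(i, j). (lab (Tooth i j), lab (Bar i))) ` ({..<m} \<times> {..<t})"
  have lab_eq: "lab k = lab k' \<longleftrightarrow> k = k'" if "k \<in> comb_parts" "k' \<in> comb_parts" for k k'
    using assms that by (auto dest: inj_onD)
  have "lab ` comb_parts = insert (lab Outer) (A \<union> fst ` T)"
    unfolding comb_parts_def A_def T_def by force
  moreover have "(`) lab ` comb_part_zones = comb_zones (lab Outer) A T"
    unfolding comb_part_zones_def comb_zones_def A_def T_def
    by (simp add: image_Un image_image case_prod_beta insert_commute)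
  moreover have "k_ind_pierced 1 (insert (lab Outer) (A \<union> fst ` T), comb_zones (lab Outer) A T)"
  proof (rule k_ind_pierced_comb)
    show "finite A" "finite T"
      unfolding A_def T_def by simp_all
    show "lab Outer \<notin> A" "lab Outer \<notin> fst ` T" "A \<inter> fst ` T = {}" "snd ` T \<subseteq> A"
      unfolding A_def T_def using lab_eq by auto
    show "inj_on fst T"
      unfolding T_def using lab_eq by (auto simp: inj_on_def)
  qed simp
  ultimately show ?thesis
    by simp
qed

end

section \<open>The codes S_n and P(2_n)\<close>

lemma code_k_ind_pierced_comb:
  assumes "inj_on lab (comb_parts m t)" "lab ` comb_parts m t = {1..M}"
  shows "code_k_ind_pierced 1 M (indicator_word M ` (`) lab ` comb_part_zones m t)"
proof (rule code_k_ind_pierced_indicator_words)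
  show "{} \<in> (`) lab ` comb_part_zones m t"
    unfolding comb_part_zones_def by auto
  have "Z \<subseteq> comb_parts m t" if "Z \<in> comb_part_zones m t" for Z
    using that unfolding comb_part_zones_def comb_parts_def by auto
  then show "\<forall>A\<in>(`) lab ` comb_part_zones m t. A \<subseteq> {1..M}"
    using assms(2) by blast
qed (use well_formed_comb[OF assms(1)] k_ind_pierced_comb_parts[OF assms(1)] assms(2) in simp_all)

definition S_label :: "nat \<Rightarrow> comb_part \<Rightarrow> nat" where
  "S_label n k = (case k of Outer \<Rightarrow> n + 1 | Bar _ \<Rightarrow> 1 | Tooth _ j \<Rightarrow> j + 2)"

lemma inj_on_S_label: "1 \<le> n \<Longrightarrow> inj_on (S_label n) (comb_parts 1 (n - 1))"
  unfolding inj_on_def comb_parts_def S_label_def by auto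

lemma S_label_range:
  assumes "1 \<le> n"
  shows "S_label n ` comb_parts 1 (n - 1) = {1..n+1}"
proof
  show "S_label n ` comb_parts 1 (n - 1) \<subseteq> {1..n+1}"
    unfolding comb_parts_def S_label_def by auto
  show "{1..n+1} \<subseteq> S_label n ` comb_parts 1 (n - 1)"
  proof
    fix x assume x: "x \<in> {1..n+1}"
    consider "x = 1" | "x = n + 1" | "2 \<le> x" "x \<le> n"
      using x by fastforce
    then show "x \<in> S_label n ` comb_parts 1 (n - 1)"
    proof cases
      case 1
      then show ?thesis
        by (intro image_eqI[of _ _ "Bar 0"]) (simp_all add: S_label_def)
    next
      case 2
      then show ?thesis
        by (intro image_eqI[of _ _ Outer]) (simp_all add: S_label_def)
    next
      case 3
      then show ?thesis
        by (intro image_eqI[of _ _ "Tooth 0 (x - 2)"]) (simp_all add: S_label_def)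
    qed
  qed
qed

definition S_zone :: "nat \<Rightarrow> nat \<Rightarrow> comb_part set" where
  "S_zone n i =
    (if i < n then {Outer, Bar 0, Tooth 0 (i - 1)}
     else if i = n then {Outer, Bar 0}
     else if i < 2 * n then {Outer, Tooth 0 (i - n - 1)}
     else {Outer})"

lemma s_word_eq_indicator_word:
  assumes "1 \<le> i"
  shows "s_word n i = indicator_word (n + 1) (S_label n ` S_zone n i)"
proof -
  consider "i < n" | "i = n" | "n < i" "i < 2 * n" | "2 * n \<le> i"
    by linarith
  then show ?thesis
  proof cases
    case 1
    then have "S_label n ` S_zone n i = {1} \<union> {i + 1} \<union> {n + 1}"
      using assms by (auto simp: S_zone_def S_label_def)
    then show ?thesis
      using 1 assms by (simp add: s_word_def unit_vec_eq_indicator_word vadd_indicator_word)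
  next
    case 2
    then have "S_label n ` S_zone n i = {1} \<union> {n + 1}"
      by (auto simp: S_zone_def S_label_def)
    then show ?thesis
      using 2 assms by (simp add: s_word_def unit_vec_eq_indicator_word vadd_indicator_word)
  next
    case 3
    then have "S_label n ` S_zone n i = {i + 1 - n} \<union> {n + 1}"
      by (auto simp: S_zone_def S_label_def)
    then show ?thesis
      using 3 by (simp add: s_word_def unit_vec_eq_indicator_word vadd_indicator_word)
  qed (use assms in \<open>auto simp: s_word_def S_zone_def S_label_def unit_vec_eq_indicator_word\<close>)
qed

lemma comb_part_zones_S:
  assumes "1 \<le> n"
  shows "comb_part_zones 1 (n - 1) = insert {} (S_zone n ` {1..2*n})"
proof
  have "S_zone n i \<in> comb_part_zones 1 (n - 1)" if "i \<in> {1..2*n}" for i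
    using that unfolding comb_part_zones_def S_zone_def
    by (auto intro: image_eqI[of _ _ "(0, i - 1)"] image_eqI[of _ _ "(0, i - n - 1)"])
  then show "insert {} (S_zone n ` {1..2*n}) \<subseteq> comb_part_zones 1 (n - 1)"
    unfolding comb_part_zones_def by blast
  show "comb_part_zones 1 (n - 1) \<subseteq> insert {} (S_zone n ` {1..2*n})"
  proof
    fix Z assume "Z \<in> comb_part_zones 1 (n - 1)"
    then consider "Z = {}" | "Z = {Outer}" | "Z = {Outer, Bar 0}"
      | j where "j < n - 1" "Z = {Outer, Bar 0, Tooth 0 j}"
      | j where "j < n - 1" "Z = {Outer, Tooth 0 j}"
      unfolding comb_part_zones_def by auto
    then show "Z \<in> insert {} (S_zone n ` {1..2*n})"
    proof cases
      case 2
      then show ?thesis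
        using assms by (intro insertI2 image_eqI[of _ _ "2 * n"]) (auto simp: S_zone_def)
    next
      case 3
      then show ?thesis
        using assms by (intro insertI2 image_eqI[of _ _ n]) (auto simp: S_zone_def)
    next
      case (4 j)
      then show ?thesis
        by (intro insertI2 image_eqI[of _ _ "j + 1"]) (auto simp: S_zone_def)
    next
      case (5 j)
      then show ?thesis
        by (intro insertI2 image_eqI[of _ _ "j + n + 1"]) (auto simp: S_zone_def)
    qed simp
  qed
qed

lemma S_code_eq_comb_code:
  assumes "1 \<le> n"
  shows "S_code n = indicator_word (n + 1) ` (`) (S_label n) ` comb_part_zones 1 (n - 1)"
proof -
  have "s_word n ` {1..2*n} = (\<lambda>i. indicator_word (n + 1) (S_label n ` S_zone n i)) ` {1..2*n}"
    using s_word_eq_indicator_word by (intro image_cong) auto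
  then show ?thesis
    unfolding S_code_def comb_part_zones_S[OF assms] zero_word_eq_indicator_word
    by (simp add: image_image)
qed

definition P2_label :: "nat \<Rightarrow> comb_part \<Rightarrow> nat" where
  "P2_label n k = (case k of Outer \<Rightarrow> 2 * n + 1 | Bar i \<Rightarrow> 2 * i + 1 | Tooth i _ \<Rightarrow> 2 * i + 2)"

lemma inj_on_P2_label: "inj_on (P2_label n) (comb_parts n 1)"
  unfolding inj_on_def comb_parts_def P2_label_def by auto presburger+

lemma P2_label_range: "P2_label n ` comb_parts n 1 = {1..2*n+1}"
proof
  show "P2_label n ` comb_parts n 1 \<subseteq> {1..2*n+1}"
    unfolding comb_parts_def P2_label_def by auto
  show "{1..2*n+1} \<subseteq> P2_label n ` comb_parts n 1"
  proof
    fix x assume x: "x \<in> {1..2*n+1}"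
    define i where "i = (x - 1) div 2"
    have "x = 2 * i + 1 \<or> x = 2 * i + 2" "x = 2 * n + 1 \<or> i < n"
      using x unfolding i_def by auto
    then consider "x = 2 * n + 1" | "i < n" "x = 2 * i + 1" | "i < n" "x = 2 * i + 2"
      by blast
    then show "x \<in> P2_label n ` comb_parts n 1"
    proof cases
      case 1
      then show ?thesis
        by (intro image_eqI[of _ _ Outer]) (simp_all add: P2_label_def)
    next
      case 2
      then show ?thesis
        by (intro image_eqI[of _ _ "Bar i"]) (simp_all add: P2_label_def)
    next
      case 3
      then show ?thesis
        by (intro image_eqI[of _ _ "Tooth i 0"]) (simp_all add: P2_label_def)
    qed
  qed
qed

lemma P2_code_eq_comb_code:
  "P2_code n = indicator_word (2 * n + 1) ` (`) (P2_label n) ` comb_part_zones n 1"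
proof -
  let ?w = "indicator_word (2 * n + 1)"
  have zones: "comb_part_zones n 1 =
      {{}, {Outer}} \<union> (\<Union>i<n. {{Outer, Bar i}, {Outer, Bar i, Tooth i 0}, {Outer, Tooth i 0}})"
    unfolding comb_part_zones_def by auto
  have "{vadd (unit_vec (2*n+1) (2*i+1)) (unit_vec (2*n+1) (2*n+1)),
         vadd (vadd (unit_vec (2*n+1) (2*i+1)) (unit_vec (2*n+1) (2*i+2)))
           (unit_vec (2*n+1) (2*n+1)),
         vadd (unit_vec (2*n+1) (2*i+2)) (unit_vec (2*n+1) (2*n+1))} =
       ?w ` (`) (P2_label n) ` {{Outer, Bar i}, {Outer, Bar i, Tooth i 0}, {Outer, Tooth i 0}}"
    if "i < n" for i
    using that
    by (simp add: P2_label_def unit_vec_eq_indicator_word vadd_indicator_word insert_commute)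
  then show ?thesis
    unfolding P2_code_def zones atLeast0LessThan zero_word_eq_indicator_word
    by (simp add: image_UN image_Un unit_vec_eq_indicator_word P2_label_def)
qed

theorem mainTheorem1:
  fixes n :: nat
  assumes "n \<ge> 1"
  shows "code_k_ind_pierced 1 (n+1) (S_code n) \<and> code_k_ind_pierced 1 (2*n+1) (P2_code n)"
proof
  show "code_k_ind_pierced 1 (n+1) (S_code n)"
    unfolding S_code_eq_comb_code[OF assms]
    using code_k_ind_pierced_comb[OF inj_on_S_label[OF assms] S_label_range[OF assms]] .
  show "code_k_ind_pierced 1 (2*n+1) (P2_code n)"
    unfolding P2_code_eq_comb_code
    using code_k_ind_pierced_comb[OF inj_on_P2_label P2_label_range] .
qed

end
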